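(* For all $n\ge1$, $d\ge2$ and $1\le r\le n$, $$b_{n,d}(\Delta_{n-r})=\sum_{x}b_{n,d-1}(x),$$ where the sum ranges over all simple $n$-braids $x$ that are right divisible by $\Delta_{n-r}$ in $B_n^+$.
   Context: $B_n^+$ is the positive braid monoid with generators $\sigma_1,\dots,\sigma_{n-1}$ and relations $\sigma_i\sigma_j=\sigma_j\sigma_i$ ($|i-j|\ge2$), $\sigma_i\sigma_j\sigma_i=\sigma_j\sigma_i\sigma_j$ ($|i-j|=1$). $\Delta_1=1$, $\Delta_m=\sigma_1\cdots\sigma_{m-1}\Delta_{m-1}$, with the convention $\Delta_0=1$; $\Delta_m$ is viewed in $B_n^+$ for $m\le n$. Simple $n$-braids are the left (equivalently right) divisors of $\Delta_n$ in $B_n^+$. For simple $x$, $D_L(x)$ (resp. $D_R(x)$) is the set of $i\in\{1,\dots,n-1\}$ with $\sigma_i$ a left (resp. right) divisor of $x$. A sequence $(x_1,\dots,x_d)$ of simple $n$-braids is normal if $x_k=\gcd(\Delta_n,x_k\cdots x_d)$ (greatest common left divisor) for each $k$; equivalently $D_R(x_k)\supseteq D_L(x_{k+1})$ for all $k<d$. For a simple $n$-braid $x$, $b_{n,d}(x)$ is the number of normal sequences $(x_1,\dots,x_{d-1},x)$. *)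

theory Defs
  imports Main
begin

text \<open>Positive braid monoid B_n^+: words over generators 1..n-1 (letter i stands for sigma_i)
  modulo the congruence generated by the braid relations.\<close>

inductive braid_step :: "nat \<Rightarrow> nat list \<Rightarrow> nat list \<Rightarrow> bool" for n where
  comm: "\<lbrakk>1 \<le> i; i < n; 1 \<le> j; j < n; i + 2 \<le> j \<or> j + 2 \<le> i\<rbrakk>
          \<Longrightarrow> braid_step n (u @ [i, j] @ v) (u @ [j, i] @ v)"
| braid: "\<lbrakk>1 \<le> i; i < n; 1 \<le> j; j < n; i = j + 1 \<or> j = i + 1\<rbrakk>
          \<Longrightarrow> braid_step n (u @ [i, j, i] @ v) (u @ [j, i, j] @ v)"

definition braid_eq :: "nat \<Rightarrow> nat list \<Rightarrow> nat list \<Rightarrow> bool" where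
  "braid_eq n = (symclp (braid_step n))\<^sup>*\<^sup>*"

definition pos_words :: "nat \<Rightarrow> nat list set" where
  "pos_words n = {w. set w \<subseteq> {1..<n}}"

definition braid_cls :: "nat \<Rightarrow> nat list \<Rightarrow> nat list set" where
  "braid_cls n w = {v. braid_eq n w v}"

definition ldiv :: "nat \<Rightarrow> nat list \<Rightarrow> nat list \<Rightarrow> bool" where
  "ldiv n a b \<longleftrightarrow> (\<exists>c \<in> pos_words n. braid_eq n (a @ c) b)"

definition rdiv :: "nat \<Rightarrow> nat list \<Rightarrow> nat list \<Rightarrow> bool" where
  "rdiv n a b \<longleftrightarrow> (\<exists>c \<in> pos_words n. braid_eq n (c @ a) b)"

fun delta :: "nat \<Rightarrow> nat list" where
  "delta 0 = []"
| "delta (Suc m) = [1..<Suc m] @ delta m"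

definition simple_braids :: "nat \<Rightarrow> nat list set set" where
  "simple_braids n = {braid_cls n w | w. w \<in> pos_words n \<and> ldiv n w (delta n)}"

definition DL :: "nat \<Rightarrow> nat list set \<Rightarrow> nat set" where
  "DL n x = {i. 1 \<le> i \<and> i < n \<and> (\<exists>w \<in> x. ldiv n [i] w)}"

definition DR :: "nat \<Rightarrow> nat list set \<Rightarrow> nat set" where
  "DR n x = {i. 1 \<le> i \<and> i < n \<and> (\<exists>w \<in> x. rdiv n [i] w)}"

definition normal_seq :: "nat \<Rightarrow> nat list set list \<Rightarrow> bool" where
  "normal_seq n xs \<longleftrightarrow> set xs \<subseteq> simple_braids n \<and>
     (\<forall>k. Suc k < length xs \<longrightarrow> DL n (xs ! Suc k) \<subseteq> DR n (xs ! k))"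

definition bnd :: "nat \<Rightarrow> nat \<Rightarrow> nat list set \<Rightarrow> nat" where
  "bnd n d x = card {xs. length xs = d - 1 \<and> normal_seq n (xs @ [x])}"

end

theory Submission
  imports Defs
begin

text \<open>For \<open>m \<le> n\<close> the simple braid \<open>\<Delta>\<^sub>m\<close> has \<open>D\<^sub>L(\<Delta>\<^sub>m) = {1, \<dots>, m - 1}\<close> and is the least common
  left multiple of \<open>\<sigma>\<^sub>1, \<dots>, \<sigma>\<^sub>m\<^sub>-\<^sub>1\<close>. Being also invariant under reversal of words, \<open>\<Delta>\<^sub>m\<close> right
  divides a positive braid \<open>x\<close> exactly when \<open>D\<^sub>R(x) \<supseteq> D\<^sub>L(\<Delta>\<^sub>m)\<close>. Hence the normal sequences
  \<open>(x\<^sub>1, \<dots>, x\<^sub>d\<^sub>-\<^sub>1, \<Delta>\<^sub>m)\<close> are the normal sequences \<open>(x\<^sub>1, \<dots>, x\<^sub>d\<^sub>-\<^sub>1)\<close> with \<open>\<Delta>\<^sub>m\<close> right dividing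
  \<open>x\<^sub>d\<^sub>-\<^sub>1\<close>, and counting them by their last entry gives the sum.

  The lcm property rests on Garside's theorem: if \<open>\<sigma>\<^sub>i X = \<sigma>\<^sub>j Y\<close> then both sides are
  \<open>lcm(\<sigma>\<^sub>i, \<sigma>\<^sub>j) Z\<close> for some \<open>Z\<close>. It is proved by induction on the length of \<open>X\<close>: each braid relation
  preserves this relation between the heads, and the relation is transitive as long as the
  theorem is known for shorter words.\<close>

lemma braid_eq_equivclp: "braid_eq n = equivclp (braid_step n)"
  by (simp add: braid_eq_def equivclp_def)

lemma braid_eq_refl [simp]: "braid_eq n u u"
  by (simp add: braid_eq_equivclp)

lemma braid_eq_sym [sym]: "braid_eq n u v \<Longrightarrow> braid_eq n v u"
  by (simp add: braid_eq_equivclp equivclp_sym)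

lemma braid_eq_trans [trans]: "braid_eq n u v \<Longrightarrow> braid_eq n v w \<Longrightarrow> braid_eq n u w"
  unfolding braid_eq_equivclp by (rule equivclp_trans)

lemma braid_step_into_braid_eq: "braid_step n u v \<Longrightarrow> braid_eq n u v"
  by (auto simp: braid_eq_equivclp)

lemma braid_eq_invariant:
  assumes "\<And>u v. braid_step n u v \<Longrightarrow> f u = f v" and "braid_eq n u v"
  shows "f u = f v"
  using assms(2) unfolding braid_eq_equivclp
  by (induction rule: equivclp_induct) (auto dest: assms(1))

lemma braid_eq_map:
  assumes "\<And>u v. braid_step n u v \<Longrightarrow> braid_eq n (f u) (f v)" and "braid_eq n u v"
  shows "braid_eq n (f u) (f v)"
  using assms(2) unfolding braid_eq_equivclp
proof (induction rule: equivclp_induct)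
  case (step y z)
  then have "equivclp (braid_step n) (f y) (f z)"
    using assms(1) by (auto simp: braid_eq_equivclp intro: equivclp_sym)
  with step.IH show ?case by (rule equivclp_trans)
qed simp

lemma braid_eq_length: "braid_eq n u v \<Longrightarrow> length u = length v"
  by (rule braid_eq_invariant) (auto elim: braid_step.cases)

lemma braid_eq_set: "braid_eq n u v \<Longrightarrow> set u = set v"
  by (rule braid_eq_invariant) (auto elim: braid_step.cases)

lemma braid_step_append: "braid_step n v v' \<Longrightarrow> braid_step n (u @ v @ w) (u @ v' @ w)"
proof (induction rule: braid_step.induct)
  case (comm i j u' v')
  then show ?case using braid_step.comm[of i n j "u @ u'" "v' @ w"] by simp
next
  case (braid i j u' v')
  then show ?case using braid_step.braid[of i n j "u @ u'" "v' @ w"] by simp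
qed

lemma braid_eq_append: "braid_eq n v v' \<Longrightarrow> braid_eq n (u @ v @ w) (u @ v' @ w)"
  by (rule braid_eq_map) (auto intro: braid_step_into_braid_eq braid_step_append)

lemma braid_eq_append_left: "braid_eq n v v' \<Longrightarrow> braid_eq n (u @ v) (u @ v')"
  using braid_eq_append[of n v v' u "[]"] by simp

lemma braid_eq_append_right: "braid_eq n v v' \<Longrightarrow> braid_eq n (v @ w) (v' @ w)"
  using braid_eq_append[of n v v' "[]" w] by simp

lemma braid_eq_Cons: "braid_eq n v v' \<Longrightarrow> braid_eq n (a # v) (a # v')"
  using braid_eq_append_left[of n v v' "[a]"] by simp

lemma braid_step_rev: "braid_step n u v \<Longrightarrow> braid_step n (rev u) (rev v)"
proof (induction rule: braid_step.induct)
  case (comm i j u v)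
  then show ?case using braid_step.comm[of j n i "rev v" "rev u"] by auto
next
  case (braid i j u v)
  then show ?case using braid_step.braid[of i n j "rev v" "rev u"] by auto
qed

lemma braid_eq_rev: "braid_eq n u v \<Longrightarrow> braid_eq n (rev u) (rev v)"
  by (rule braid_eq_map) (auto intro: braid_step_into_braid_eq braid_step_rev)

definition far :: "nat \<Rightarrow> nat \<Rightarrow> nat \<Rightarrow> bool" where
  "far n i j \<longleftrightarrow> 1 \<le> i \<and> i < n \<and> 1 \<le> j \<and> j < n \<and> (i + 2 \<le> j \<or> j + 2 \<le> i)"

definition adjacent :: "nat \<Rightarrow> nat \<Rightarrow> nat \<Rightarrow> bool" where
  "adjacent n i j \<longleftrightarrow> 1 \<le> i \<and> i < n \<and> 1 \<le> j \<and> j < n \<and> (i = j + 1 \<or> j = i + 1)"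

lemma far_commute: "far n i j \<Longrightarrow> far n j i"
  by (auto simp: far_def)

lemma adjacent_commute: "adjacent n i j \<Longrightarrow> adjacent n j i"
  by (auto simp: adjacent_def)

lemma braid_eq_swap: "far n i j \<Longrightarrow> braid_eq n (u @ i # j # v) (u @ j # i # v)"
  using braid_step.comm[of i n j u v] by (auto simp: far_def intro: braid_step_into_braid_eq)

lemma braid_eq_braid: "adjacent n i j \<Longrightarrow> braid_eq n (u @ i # j # i # v) (u @ j # i # j # v)"
  using braid_step.braid[of i n j u v] by (auto simp: adjacent_def intro: braid_step_into_braid_eq)

lemma braid_eq_swap_head: "far n i j \<Longrightarrow> braid_eq n (i # j # v) (j # i # v)"
  using braid_eq_swap[of n i j "[]" v] by simp

lemma braid_eq_braid_head: "adjacent n i j \<Longrightarrow> braid_eq n (i # j # i # v) (j # i # j # v)"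
  using braid_eq_braid[of n i j "[]" v] by simp

lemma braid_eq_three_generators:
  assumes "adjacent n a b" and "adjacent n b c" and "far n a c"
  shows "braid_eq n (b # a # c # b # a # S) (c # b # a # c # b # S)"
proof -
  have "braid_eq n (b # a # c # b # a # S) (b # c # a # b # a # S)"
    using braid_eq_swap[OF assms(3), of "[b]"] by simp
  also have "braid_eq n \<dots> (b # c # b # a # b # S)" using braid_eq_braid[OF assms(1), of "[b, c]"] by simp
  also have "braid_eq n \<dots> (c # b # c # a # b # S)" using assms(2) by (rule braid_eq_braid_head)
  also have "braid_eq n \<dots> (c # b # a # c # b # S)"
    using braid_eq_swap[OF far_commute[OF assms(3)], of "[c, b]"] by simp
  finally show ?thesis .
qed

text \<open>\<open>through_lcm n i X j Y\<close> says that \<open>\<sigma>\<^sub>i X\<close> and \<open>\<sigma>\<^sub>j Y\<close> are both of the form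
  \<open>lcm(\<sigma>\<^sub>i, \<sigma>\<^sub>j) Z\<close>, the lcm being \<open>\<sigma>\<^sub>i\<close>, \<open>\<sigma>\<^sub>i\<sigma>\<^sub>j = \<sigma>\<^sub>j\<sigma>\<^sub>i\<close> or \<open>\<sigma>\<^sub>i\<sigma>\<^sub>j\<sigma>\<^sub>i = \<sigma>\<^sub>j\<sigma>\<^sub>i\<sigma>\<^sub>j\<close>.\<close>

definition through_lcm :: "nat \<Rightarrow> nat \<Rightarrow> nat list \<Rightarrow> nat \<Rightarrow> nat list \<Rightarrow> bool" where
  "through_lcm n i X j Y \<longleftrightarrow> (i = j \<and> braid_eq n X Y)
    \<or> (far n i j \<and> (\<exists>Z. braid_eq n X (j # Z) \<and> braid_eq n Y (i # Z)))
    \<or> (adjacent n i j \<and> (\<exists>Z. braid_eq n X (j # i # Z) \<and> braid_eq n Y (i # j # Z)))"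

definition through_lcm_below :: "nat \<Rightarrow> nat \<Rightarrow> bool" where
  "through_lcm_below n N \<longleftrightarrow>
    (\<forall>X Y i j. length X < N \<longrightarrow> braid_eq n (i # X) (j # Y) \<longrightarrow> through_lcm n i X j Y)"

lemma through_lcm_commute: "through_lcm n i X j Y \<Longrightarrow> through_lcm n j Y i X"
  unfolding through_lcm_def using far_commute adjacent_commute braid_eq_sym by blast

lemma through_lcm_cong:
  "through_lcm n i X j Y \<Longrightarrow> braid_eq n X X' \<Longrightarrow> braid_eq n Y Y' \<Longrightarrow> through_lcm n i X' j Y'"
  unfolding through_lcm_def using braid_eq_sym braid_eq_trans by blast

lemma through_lcm_if_braid_step:
  "braid_step n (i # X) (j # Y) \<Longrightarrow> through_lcm n i X j Y"
proof (induction "i # X" "j # Y" rule: braid_step.induct)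
  case (comm a b u v)
  show ?case
  proof (cases u)
    case Nil
    with comm have "far n i j" "X = j # v" "Y = i # v" by (auto simp: far_def)
    then show ?thesis unfolding through_lcm_def using braid_eq_refl by blast
  next
    case (Cons c u')
    with comm have "braid_step n X Y" using braid_step.comm[of a n b u' v] by auto
    with comm Cons show ?thesis by (auto simp: through_lcm_def intro: braid_step_into_braid_eq)
  qed
next
  case (braid a b u v)
  show ?case
  proof (cases u)
    case Nil
    with braid have "adjacent n i j" "X = j # i # v" "Y = i # j # v" by (auto simp: adjacent_def)
    then show ?thesis unfolding through_lcm_def using braid_eq_refl by blast
  next
    case (Cons c u')
    with braid have "braid_step n X Y" using braid_step.braid[of a n b u' v] by auto
    with braid Cons show ?thesis by (auto simp: through_lcm_def intro: braid_step_into_braid_eq)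
  qed
qed

lemma through_lcm_belowD:
  "through_lcm_below n N \<Longrightarrow> length X < N \<Longrightarrow> braid_eq n (i # X) (j # Y) \<Longrightarrow> through_lcm n i X j Y"
  unfolding through_lcm_below_def by blast

lemma through_lcm_below_cancel:
  "through_lcm_below n N \<Longrightarrow> length X < N \<Longrightarrow> braid_eq n (i # X) (i # Y) \<Longrightarrow> braid_eq n X Y"
  using through_lcm_belowD[of n N X i i Y] by (auto simp: through_lcm_def far_def adjacent_def)

lemma through_lcm_sameD: "through_lcm n i X i Y \<Longrightarrow> braid_eq n X Y"
  by (auto simp: through_lcm_def far_def adjacent_def)

lemma through_lcm_farD:
  "through_lcm n i X j Y \<Longrightarrow> far n i j \<Longrightarrow> \<exists>Z. braid_eq n X (j # Z) \<and> braid_eq n Y (i # Z)"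
  by (auto simp: through_lcm_def far_def adjacent_def)

lemma through_lcm_adjacentD:
  "through_lcm n i X j Y \<Longrightarrow> adjacent n i j \<Longrightarrow>
    \<exists>Z. braid_eq n X (j # i # Z) \<and> braid_eq n Y (i # j # Z)"
  by (auto simp: through_lcm_def far_def adjacent_def)

lemma through_lcm_trans_far_far:
  assumes IH: "through_lcm_below n (length Y)" and ij: "far n i j" and jk: "far n j k"
    and XY: "through_lcm n i X j Y" and YW: "through_lcm n j Y k W"
  shows "through_lcm n i X k W"
proof -
  obtain Z1 where Z1: "braid_eq n X (j # Z1)" "braid_eq n Y (i # Z1)"
    using through_lcm_farD[OF XY ij] by blast
  obtain Z2 where Z2: "braid_eq n Y (k # Z2)" "braid_eq n W (j # Z2)"
    using through_lcm_farD[OF YW jk] by blast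
  have "braid_eq n (i # Z1) (k # Z2)" using Z1 Z2 braid_eq_sym braid_eq_trans by blast
  then have "through_lcm n i Z1 k Z2"
    using through_lcm_belowD[OF IH] braid_eq_length[OF Z1(2)] by simp
  then consider (same) "i = k" "braid_eq n Z1 Z2"
    | (far) U where "far n i k" "braid_eq n Z1 (k # U)" "braid_eq n Z2 (i # U)"
    | (adjacent) U where "adjacent n i k" "braid_eq n Z1 (k # i # U)" "braid_eq n Z2 (i # k # U)"
    unfolding through_lcm_def by blast
  then show ?thesis
  proof cases
    case same
    have "braid_eq n X (j # Z1)" by (rule Z1(1))
    also have "braid_eq n \<dots> (j # Z2)" using same(2) by (rule braid_eq_Cons)
    also have "braid_eq n \<dots> W" using Z2(2) by (rule braid_eq_sym)
    finally show ?thesis using same(1) unfolding through_lcm_def by blast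
  next
    case (far U)
    have "braid_eq n X (j # Z1)" by (rule Z1(1))
    also have "braid_eq n \<dots> (j # k # U)" using far(2) by (rule braid_eq_Cons)
    also have "braid_eq n \<dots> (k # j # U)" using jk by (rule braid_eq_swap_head)
    finally have X: "braid_eq n X (k # j # U)" .
    have "braid_eq n W (j # Z2)" by (rule Z2(2))
    also have "braid_eq n \<dots> (j # i # U)" using far(3) by (rule braid_eq_Cons)
    also have "braid_eq n \<dots> (i # j # U)" using far_commute[OF ij] by (rule braid_eq_swap_head)
    finally have W: "braid_eq n W (i # j # U)" .
    show ?thesis unfolding through_lcm_def using far(1) X W by blast
  next
    case (adjacent U)
    have "braid_eq n X (j # Z1)" by (rule Z1(1))
    also have "braid_eq n \<dots> (j # k # i # U)" using adjacent(2) by (rule braid_eq_Cons)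
    also have "braid_eq n \<dots> (k # j # i # U)" using jk by (rule braid_eq_swap_head)
    also have "braid_eq n \<dots> (k # i # j # U)"
      using braid_eq_swap[OF far_commute[OF ij], of "[k]"] by simp
    finally have X: "braid_eq n X (k # i # j # U)" .
    have "braid_eq n W (j # Z2)" by (rule Z2(2))
    also have "braid_eq n \<dots> (j # i # k # U)" using adjacent(3) by (rule braid_eq_Cons)
    also have "braid_eq n \<dots> (i # j # k # U)" using far_commute[OF ij] by (rule braid_eq_swap_head)
    also have "braid_eq n \<dots> (i # k # j # U)" using braid_eq_swap[OF jk, of "[i]"] by simp
    finally have W: "braid_eq n W (i # k # j # U)" .
    show ?thesis unfolding through_lcm_def using adjacent(1) X W by blast
  qed
qed

lemma through_lcm_trans_far_adjacent:
  assumes IH: "through_lcm_below n (length Y)" and ij: "far n i j" and jk: "adjacent n j k"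
    and XY: "through_lcm n i X j Y" and YW: "through_lcm n j Y k W"
  shows "through_lcm n i X k W"
proof -
  obtain Z1 where Z1: "braid_eq n X (j # Z1)" "braid_eq n Y (i # Z1)"
    using through_lcm_farD[OF XY ij] by blast
  obtain Z2 where Z2: "braid_eq n Y (k # j # Z2)" "braid_eq n W (j # k # Z2)"
    using through_lcm_adjacentD[OF YW jk] by blast
  have lengths: "length Y = Suc (length Z1)" "length Y = Suc (Suc (length Z2))"
    using braid_eq_length[OF Z1(2)] braid_eq_length[OF Z2(1)] by simp_all
  have "braid_eq n (i # Z1) (k # j # Z2)" using Z1 Z2 braid_eq_sym braid_eq_trans by blast
  then have "through_lcm n i Z1 k (j # Z2)"
    using through_lcm_belowD[OF IH] lengths by simp
  moreover have "i \<noteq> k" using ij jk by (auto simp: far_def adjacent_def)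
  ultimately consider
      (far) U where "far n i k" "braid_eq n Z1 (k # U)" "braid_eq n (j # Z2) (i # U)"
    | (adjacent) U where "adjacent n i k" "braid_eq n Z1 (k # i # U)" "braid_eq n (j # Z2) (i # k # U)"
    unfolding through_lcm_def by blast
  then show ?thesis
  proof cases
    case (far U)
    have "through_lcm n j Z2 i U" using through_lcm_belowD[OF IH _ far(3)] lengths by simp
    then obtain V where V: "braid_eq n Z2 (i # V)" "braid_eq n U (j # V)"
      using through_lcm_farD far_commute[OF ij] by blast
    have "braid_eq n X (j # Z1)" by (rule Z1(1))
    also have "braid_eq n \<dots> (j # k # U)" using far(2) by (rule braid_eq_Cons)
    also have "braid_eq n \<dots> (j # k # j # V)" using V(2) by (intro braid_eq_Cons)
    also have "braid_eq n \<dots> (k # j # k # V)" using jk by (rule braid_eq_braid_head)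
    finally have X: "braid_eq n X (k # j # k # V)" .
    have "braid_eq n W (j # k # Z2)" by (rule Z2(2))
    also have "braid_eq n \<dots> (j # k # i # V)" using V(1) by (intro braid_eq_Cons)
    also have "braid_eq n \<dots> (j # i # k # V)"
      using braid_eq_swap[OF far_commute[OF far(1)], of "[j]"] by simp
    also have "braid_eq n \<dots> (i # j # k # V)" using far_commute[OF ij] by (rule braid_eq_swap_head)
    finally have W: "braid_eq n W (i # j # k # V)" .
    show ?thesis unfolding through_lcm_def using far(1) X W by blast
  next
    case (adjacent U)
    have "through_lcm n j Z2 i (k # U)" using through_lcm_belowD[OF IH _ adjacent(3)] lengths by simp
    then obtain V where V: "braid_eq n Z2 (i # V)" "braid_eq n (k # U) (j # V)"
      using through_lcm_farD far_commute[OF ij] by blast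
    have "length Z1 = Suc (Suc (length U))" using braid_eq_length[OF adjacent(2)] by simp
    then have "through_lcm n k U j V" using through_lcm_belowD[OF IH _ V(2)] lengths by simp
    then obtain S where S: "braid_eq n U (j # k # S)" "braid_eq n V (k # j # S)"
      using through_lcm_adjacentD adjacent_commute[OF jk] by blast
    have ki: "adjacent n k i" using adjacent(1) by (rule adjacent_commute)
    have "braid_eq n X (j # Z1)" by (rule Z1(1))
    also have "braid_eq n \<dots> (j # k # i # U)" using adjacent(2) by (rule braid_eq_Cons)
    also have "braid_eq n \<dots> (j # k # i # j # k # S)" using braid_eq_append_left[OF S(1), of "[j, k, i]"] by simp
    also have "braid_eq n \<dots> (k # i # j # k # i # S)"
      using braid_eq_three_generators[OF adjacent(1) adjacent_commute[OF jk] ij] by (rule braid_eq_sym)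
    finally have X: "braid_eq n X (k # i # j # k # i # S)" .
    have "braid_eq n W (j # k # Z2)" by (rule Z2(2))
    also have "braid_eq n \<dots> (j # k # i # V)" using V(1) by (intro braid_eq_Cons)
    also have "braid_eq n \<dots> (j # k # i # k # j # S)" using braid_eq_append_left[OF S(2), of "[j, k, i]"] by simp
    also have "braid_eq n \<dots> (j # i # k # i # j # S)" using braid_eq_braid[OF ki, of "[j]"] by simp
    also have "braid_eq n \<dots> (j # i # k # j # i # S)" using braid_eq_swap[OF ij, of "[j, i, k]"] by simp
    also have "braid_eq n \<dots> (i # j # k # j # i # S)" using far_commute[OF ij] by (rule braid_eq_swap_head)
    also have "braid_eq n \<dots> (i # k # j # k # i # S)" using braid_eq_braid[OF jk, of "[i]"] by simp
    finally have W: "braid_eq n W (i # k # j # k # i # S)" .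
    show ?thesis unfolding through_lcm_def using adjacent(1) X W by blast
  qed
qed

lemma through_lcm_trans_adjacent_adjacent:
  assumes IH: "through_lcm_below n (length Y)" and ij: "adjacent n i j" and jk: "adjacent n j k"
    and XY: "through_lcm n i X j Y" and YW: "through_lcm n j Y k W"
  shows "through_lcm n i X k W"
proof -
  obtain Z1 where Z1: "braid_eq n X (j # i # Z1)" "braid_eq n Y (i # j # Z1)"
    using through_lcm_adjacentD[OF XY ij] by blast
  obtain Z2 where Z2: "braid_eq n Y (k # j # Z2)" "braid_eq n W (j # k # Z2)"
    using through_lcm_adjacentD[OF YW jk] by blast
  have lengths: "length Y = Suc (Suc (length Z1))" "length Y = Suc (Suc (length Z2))"
    using braid_eq_length[OF Z1(2)] braid_eq_length[OF Z2(1)] by simp_all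
  have "braid_eq n (i # j # Z1) (k # j # Z2)" using Z1 Z2 braid_eq_sym braid_eq_trans by blast
  then have "through_lcm n i (j # Z1) k (j # Z2)"
    using through_lcm_belowD[OF IH] lengths by simp
  moreover have "\<not> adjacent n i k" using ij jk by (auto simp: adjacent_def)
  ultimately consider (same) "i = k" "braid_eq n (j # Z1) (j # Z2)"
    | (far) P where "far n i k" "braid_eq n (j # Z1) (k # P)" "braid_eq n (j # Z2) (i # P)"
    unfolding through_lcm_def by blast
  then show ?thesis
  proof cases
    case same
    have "braid_eq n X (j # i # Z1)" by (rule Z1(1))
    also have "braid_eq n \<dots> (j # i # Z2)"
      using through_lcm_below_cancel[OF IH _ same(2)] lengths by (intro braid_eq_Cons) simp
    also have "braid_eq n \<dots> W" using Z2(2) same(1) by (simp add: braid_eq_sym)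
    finally show ?thesis using same(1) unfolding through_lcm_def by blast
  next
    case (far P)
    have length_P: "length P = length Z1" using braid_eq_length[OF far(2)] by simp
    have "through_lcm n j Z1 k P" using through_lcm_belowD[OF IH _ far(2)] lengths by simp
    then obtain Q where Q: "braid_eq n Z1 (k # j # Q)" "braid_eq n P (j # k # Q)"
      using through_lcm_adjacentD jk by blast
    have "through_lcm n j Z2 i P" using through_lcm_belowD[OF IH _ far(3)] lengths by simp
    then obtain T where T: "braid_eq n Z2 (i # j # T)" "braid_eq n P (j # i # T)"
      using through_lcm_adjacentD adjacent_commute[OF ij] by blast
    have length_Q: "length P = Suc (Suc (length Q))" using braid_eq_length[OF Q(2)] by simp
    moreover have "braid_eq n (j # k # Q) (j # i # T)" using Q(2) T(2) braid_eq_sym braid_eq_trans by blast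
    ultimately have "braid_eq n (k # Q) (i # T)"
      using through_lcm_below_cancel[OF IH] length_P lengths by simp
    then have "through_lcm n k Q i T"
      using through_lcm_belowD[OF IH] length_P length_Q lengths by simp
    then obtain S where S: "braid_eq n Q (i # S)" "braid_eq n T (k # S)"
      using through_lcm_farD far_commute[OF far(1)] by blast
    have "braid_eq n X (j # i # Z1)" by (rule Z1(1))
    also have "braid_eq n \<dots> (j # i # k # j # Q)" using braid_eq_append_left[OF Q(1), of "[j, i]"] by simp
    also have "braid_eq n \<dots> (j # i # k # j # i # S)" using braid_eq_append_left[OF S(1), of "[j, i, k, j]"] by simp
    also have "braid_eq n \<dots> (k # j # i # k # j # S)" using braid_eq_three_generators[OF ij jk far(1)] .
    also have "braid_eq n \<dots> (k # j # k # i # j # S)" using braid_eq_swap[OF far(1), of "[k, j]"] by simp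
    finally have X: "braid_eq n X (k # j # k # i # j # S)" .
    have "braid_eq n W (j # k # Z2)" by (rule Z2(2))
    also have "braid_eq n \<dots> (j # k # i # j # T)" using braid_eq_append_left[OF T(1), of "[j, k]"] by simp
    also have "braid_eq n \<dots> (j # k # i # j # k # S)" using braid_eq_append_left[OF S(2), of "[j, k, i, j]"] by simp
    also have "braid_eq n \<dots> (i # j # k # i # j # S)"
      using braid_eq_three_generators[OF adjacent_commute[OF jk] adjacent_commute[OF ij] far_commute[OF far(1)]] .
    finally have W: "braid_eq n W (i # j # k # i # j # S)" .
    show ?thesis unfolding through_lcm_def using far(1) X W by blast
  qed
qed

lemma through_lcm_trans:
  assumes IH: "through_lcm_below n (length Y)"
    and XY: "through_lcm n i X j Y" and YW: "through_lcm n j Y k W"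
  shows "through_lcm n i X k W"
proof -
  have same: "through_lcm n i X k W" if "i = j \<and> braid_eq n X Y \<or> j = k \<and> braid_eq n Y W"
    using that XY YW through_lcm_cong braid_eq_refl braid_eq_sym by metis
  have adjacent_far: "through_lcm n i X k W" if "adjacent n i j" "far n j k"
    using through_lcm_trans_far_adjacent[OF IH far_commute[OF that(2)] adjacent_commute[OF that(1)]
        through_lcm_commute[OF YW] through_lcm_commute[OF XY]]
    by (rule through_lcm_commute)
  consider "i = j \<and> braid_eq n X Y" | "far n i j" | "adjacent n i j"
    using XY unfolding through_lcm_def by blast
  moreover consider "j = k \<and> braid_eq n Y W" | "far n j k" | "adjacent n j k"
    using YW unfolding through_lcm_def by blast
  ultimately show ?thesis
    using same adjacent_far through_lcm_trans_far_far[OF IH _ _ XY YW]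
      through_lcm_trans_far_adjacent[OF IH _ _ XY YW]
      through_lcm_trans_adjacent_adjacent[OF IH _ _ XY YW]
    by blast
qed

theorem through_lcm_if_braid_eq:
  "braid_eq n (i # X) (j # Y) \<Longrightarrow> through_lcm n i X j Y"
proof (induction "length X" arbitrary: i j X Y rule: less_induct)
  case less
  then have IH: "through_lcm_below n (length X)" unfolding through_lcm_below_def by blast
  have "\<exists>b V. W = b # V \<and> through_lcm n i X b V" if "braid_eq n (i # X) W" for W
    using that unfolding braid_eq_equivclp
  proof (induction rule: equivclp_induct)
    case base
    show ?case by (auto simp: through_lcm_def)
  next
    case (step W W')
    then obtain b V where W: "W = b # V" and XV: "through_lcm n i X b V" by blast
    have "braid_eq n W W'" using step.hyps(2) by (auto simp: braid_eq_equivclp)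
    then obtain b' V' where W': "W' = b' # V'" and "length V = length X"
      using W braid_eq_length[of n W W'] braid_eq_length[of n "i # X" W] step.hyps(1)
      by (cases W') (auto simp: braid_eq_equivclp)
    moreover have "through_lcm n b V b' V'"
      using step.hyps(2) W W' through_lcm_if_braid_step through_lcm_commute by blast
    ultimately show ?case using through_lcm_trans[of n V i X b] IH XV by auto
  qed
  from this[OF less.prems] show ?case by blast
qed

lemma braid_eq_Cons_cancel: "braid_eq n (a # u) (a # v) \<Longrightarrow> braid_eq n u v"
  using through_lcm_if_braid_eq through_lcm_sameD by blast

lemma braid_eq_head_from_suffix:
  "j \<notin> set u \<Longrightarrow> braid_eq n (u @ v) (j # w) \<Longrightarrow> \<exists>w'. braid_eq n v (j # w')"
proof (induction u arbitrary: w)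
  case (Cons a u)
  then have "through_lcm n a (u @ v) j w" "a \<noteq> j"
    using through_lcm_if_braid_eq by auto
  then obtain w' where "braid_eq n (u @ v) (j # w')"
    unfolding through_lcm_def by blast
  with Cons show ?case by auto
qed auto

lemma braid_eq_far_commute:
  "\<forall>a\<in>set u. far n a k \<Longrightarrow> braid_eq n (u @ k # v) (k # u @ v)"
proof (induction u)
  case (Cons a u)
  then have "braid_eq n (a # u @ k # v) (a # k # u @ v)" by (auto intro: braid_eq_Cons)
  also have "braid_eq n \<dots> (k # a # u @ v)" using Cons.prems by (auto intro: braid_eq_swap_head)
  finally show ?case by simp
qed simp

definition ldvd :: "nat \<Rightarrow> nat list \<Rightarrow> nat list \<Rightarrow> bool" where
  "ldvd n u v \<longleftrightarrow> (\<exists>w. braid_eq n (u @ w) v)"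

lemma ldvd_append_self [simp]: "ldvd n u (u @ w)"
  unfolding ldvd_def using braid_eq_refl by blast

lemma ldvd_Nil [simp]: "ldvd n [] v"
  unfolding ldvd_def by (auto intro: exI[of _ v])

lemma ldvd_trans [trans]: "ldvd n u v \<Longrightarrow> ldvd n v w \<Longrightarrow> ldvd n u w"
  unfolding ldvd_def by (metis append.assoc braid_eq_append_right braid_eq_trans)

lemma ldvd_braid_eq_left: "braid_eq n u u' \<Longrightarrow> ldvd n u v \<Longrightarrow> ldvd n u' v"
  unfolding ldvd_def using braid_eq_append_right braid_eq_sym braid_eq_trans by blast

lemma ldvd_braid_eq_right: "ldvd n u v \<Longrightarrow> braid_eq n v v' \<Longrightarrow> ldvd n u v'"
  unfolding ldvd_def using braid_eq_trans by blast

lemma far_generator_from_suffix: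
  assumes far: "\<forall>a\<in>set u. far n a b" and uv: "braid_eq n (u @ v) (b # w)"
  obtains v' where "braid_eq n v (b # v')" and "braid_eq n (u @ v') w"
proof -
  have "b \<notin> set u" using far by (auto simp: far_def)
  then obtain v' where v': "braid_eq n v (b # v')"
    using braid_eq_head_from_suffix uv by blast
  have "braid_eq n (b # u @ v') (u @ b # v')"
    using braid_eq_far_commute[OF far] by (rule braid_eq_sym)
  also have "braid_eq n \<dots> (u @ v)"
    using braid_eq_append_left[OF v'] by (rule braid_eq_sym)
  also have "braid_eq n \<dots> (b # w)" by (rule uv)
  finally have "braid_eq n (u @ v') w" by (rule braid_eq_Cons_cancel)
  with v' show thesis by (rule that)
qed

fun desc_word :: "nat \<Rightarrow> nat list" where
  "desc_word 0 = []"
| "desc_word (Suc k) = Suc k # desc_word k"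

lemma set_desc_word: "set (desc_word k) = {1..k}"
  by (induction k) auto

lemma set_delta: "set (delta k) = {1..<k}"
  by (induction k) auto

lemma rev_upt_eq_desc_word: "rev [1..<Suc k] = desc_word k"
  by (induction k) auto

lemma delta_Suc_braid_eq: "k < n \<Longrightarrow> braid_eq n (delta (Suc k)) (delta k @ desc_word k)"
proof (induction k)
  case (Suc k)
  have far: "\<forall>a\<in>set (delta k). far n a (Suc k)"
    using Suc.prems by (auto simp: set_delta far_def)
  have "delta (Suc (Suc k)) = [1..<Suc k] @ Suc k # delta (Suc k)" by simp
  also have "braid_eq n \<dots> ([1..<Suc k] @ Suc k # delta k @ desc_word k)"
    using Suc by (intro braid_eq_append_left braid_eq_Cons) simp
  also have "braid_eq n \<dots> ([1..<Suc k] @ delta k @ Suc k # desc_word k)"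
    by (rule braid_eq_append_left, rule braid_eq_sym, rule braid_eq_far_commute[OF far])
  finally show ?case by simp
qed simp

lemma desc_word_lcm_ldvd:
  "Suc k < n \<Longrightarrow> ldvd n (desc_word k) v \<Longrightarrow> ldvd n [Suc k] v \<Longrightarrow>
    ldvd n (desc_word k @ desc_word (Suc k)) v"
proof (induction k arbitrary: v)
  case (Suc k)
  define a where "a = Suc k"
  define b where "b = Suc a"
  define Q where "Q = desc_word k"
  have far: "\<forall>c\<in>set Q. far n c b"
    using Suc.prems(1) by (auto simp: Q_def b_def a_def set_desc_word far_def)
  have ab: "adjacent n a b" using Suc.prems(1) by (auto simp: adjacent_def a_def b_def)
  obtain w where w: "braid_eq n (a # Q @ w) v" using Suc.prems(2) by (auto simp: ldvd_def a_def Q_def)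
  obtain z where "braid_eq n (b # z) v" using Suc.prems(3) by (auto simp: ldvd_def a_def b_def)
  with w have "through_lcm n a (Q @ w) b z"
    using through_lcm_if_braid_eq braid_eq_sym braid_eq_trans by blast
  then obtain V where "braid_eq n (Q @ w) (b # a # V)" using through_lcm_adjacentD[OF _ ab] by blast
  then obtain w' where w': "braid_eq n w (b # w')" and Qw': "braid_eq n (Q @ w') (a # V)"
    using far_generator_from_suffix[OF far] by blast
  have "braid_eq n ([Suc k] @ V) (Q @ w')" using braid_eq_sym[OF Qw'] by (simp add: a_def)
  then have "ldvd n [Suc k] (Q @ w')" unfolding ldvd_def by blast
  then have "ldvd n (Q @ desc_word a) (Q @ w')" using Suc.IH Suc.prems(1) by (simp add: Q_def a_def)
  then obtain t where t: "braid_eq n (Q @ desc_word a @ t) (Q @ w')" unfolding ldvd_def by auto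
  have "(desc_word (Suc k) @ desc_word (Suc (Suc k))) @ t = a # Q @ b # desc_word a @ t"
    by (simp add: a_def b_def Q_def)
  also have "braid_eq n \<dots> (a # b # Q @ desc_word a @ t)"
    using braid_eq_far_commute[OF far] by (rule braid_eq_Cons)
  also have "braid_eq n \<dots> (a # b # Q @ w')" using t by (intro braid_eq_Cons)
  also have "braid_eq n \<dots> (a # Q @ b # w')"
    by (rule braid_eq_Cons, rule braid_eq_sym, rule braid_eq_far_commute[OF far])
  also have "braid_eq n \<dots> (a # Q @ w)"
    using braid_eq_append_left[OF w', of "a # Q"] braid_eq_sym by simp
  also have "braid_eq n \<dots> v" by (rule w)
  finally show ?case unfolding ldvd_def by blast
qed simp

lemma delta_ldvd_if_generators_ldvd:
  "m \<le> n \<Longrightarrow> \<forall>i\<in>{1..<m}. ldvd n [i] v \<Longrightarrow> ldvd n (delta m) v"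
proof (induction m)
  case (Suc m)
  show ?case
  proof (cases m)
    case (Suc p)
    have delta: "braid_eq n (delta (Suc p)) (delta p @ desc_word p)"
      "braid_eq n (delta (Suc (Suc p))) (delta (Suc p) @ desc_word (Suc p))"
      using delta_Suc_braid_eq[of p n] delta_Suc_braid_eq[of "Suc p" n] Suc.prems(1) \<open>m = Suc p\<close>
      by (simp_all del: delta.simps)
    have "ldvd n (delta (Suc p)) v" using Suc.IH Suc.prems \<open>m = Suc p\<close> by simp
    then obtain c where "braid_eq n (delta (Suc p) @ c) v" unfolding ldvd_def by blast
    with delta(1) have c: "braid_eq n (delta p @ desc_word p @ c) v"
      using braid_eq_append_right[OF braid_eq_sym[OF delta(1)], of c] braid_eq_trans by simp
    have "ldvd n [Suc p] v" using Suc.prems(2) \<open>m = Suc p\<close> by simp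
    then obtain z where "braid_eq n (Suc p # z) v" unfolding ldvd_def by auto
    moreover have "Suc p \<notin> set (delta p)" by (simp add: set_delta)
    ultimately obtain Z where "braid_eq n (desc_word p @ c) (Suc p # Z)"
      using braid_eq_head_from_suffix[of "Suc p" "delta p" n "desc_word p @ c"] c
        braid_eq_sym braid_eq_trans by blast
    then have "braid_eq n ([Suc p] @ Z) (desc_word p @ c)" by (simp add: braid_eq_sym)
    then have "ldvd n [Suc p] (desc_word p @ c)" unfolding ldvd_def by blast
    then have "ldvd n (desc_word p @ desc_word (Suc p)) (desc_word p @ c)"
      using desc_word_lcm_ldvd[of p n] Suc.prems(1) \<open>m = Suc p\<close> by simp
    then obtain t where t: "braid_eq n (desc_word p @ desc_word (Suc p) @ t) (desc_word p @ c)"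
      unfolding ldvd_def by auto
    have "braid_eq n (delta (Suc (Suc p)) @ t) (delta (Suc p) @ desc_word (Suc p) @ t)"
      using braid_eq_append_right[OF delta(2)] by simp
    also have "braid_eq n \<dots> (delta p @ desc_word p @ desc_word (Suc p) @ t)"
      using braid_eq_append_right[OF delta(1)] by simp
    also have "braid_eq n \<dots> (delta p @ desc_word p @ c)" using braid_eq_append_left[OF t] by simp
    also have "braid_eq n \<dots> v" by (rule c)
    finally show ?thesis using \<open>m = Suc p\<close> unfolding ldvd_def by blast
  qed simp
qed simp

lemma desc_word_pair_head:
  "Suc k < n \<Longrightarrow> \<exists>w. braid_eq n (desc_word k @ desc_word (Suc k)) (Suc k # w)"
proof (induction k)
  case (Suc k)
  define a where "a = Suc k"
  define b where "b = Suc a"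
  have far: "\<forall>c\<in>set (desc_word k). far n c b"
    using Suc.prems by (auto simp: b_def a_def set_desc_word far_def)
  obtain w where w: "braid_eq n (desc_word k @ desc_word a) (a # w)" using Suc a_def by auto
  have ab: "adjacent n a b" using Suc.prems unfolding adjacent_def a_def b_def by auto
  have "desc_word (Suc k) @ desc_word (Suc (Suc k)) = a # desc_word k @ b # desc_word a"
    by (simp add: a_def b_def)
  also have "braid_eq n \<dots> (a # b # desc_word k @ desc_word a)"
    using braid_eq_far_commute[OF far] by (rule braid_eq_Cons)
  also have "braid_eq n \<dots> (a # b # a # w)" using w by (intro braid_eq_Cons)
  also have "braid_eq n \<dots> (b # a # b # w)" using ab by (rule braid_eq_braid_head)
  finally show ?case unfolding b_def a_def by blast
qed (auto intro: braid_eq_refl)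

lemma generator_ldvd_delta: "m \<le> n \<Longrightarrow> i \<in> {1..<m} \<Longrightarrow> ldvd n [i] (delta m)"
proof (induction m)
  case (Suc m)
  have delta: "braid_eq n (delta (Suc m)) (delta m @ desc_word m)"
    using delta_Suc_braid_eq[of m n] Suc.prems by simp
  show ?case
  proof (cases "i < m")
    case True
    then have "ldvd n [i] (delta m)" using Suc by simp
    also have "ldvd n (delta m) (delta (Suc m))"
      using ldvd_braid_eq_right[OF ldvd_append_self braid_eq_sym[OF delta]] .
    finally show ?thesis .
  next
    case False
    then obtain p where p: "m = Suc p" "i = m" using Suc.prems by (cases m) auto
    obtain w where w: "braid_eq n (desc_word p @ desc_word (Suc p)) (Suc p # w)"
      using desc_word_pair_head[of p n] Suc.prems p by auto
    have far: "\<forall>c\<in>set (delta p). far n c (Suc p)"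
      using Suc.prems p by (auto simp: set_delta far_def)
    have "braid_eq n (delta (Suc m)) (delta (Suc p) @ desc_word (Suc p))" using delta p by simp
    also have "braid_eq n \<dots> (delta p @ desc_word p @ desc_word (Suc p))"
      using braid_eq_append_right[OF delta_Suc_braid_eq[of p n], of "desc_word (Suc p)"]
        Suc.prems p by simp
    also have "braid_eq n \<dots> (delta p @ Suc p # w)" using braid_eq_append_left[OF w] by simp
    also have "braid_eq n \<dots> (Suc p # delta p @ w)" using braid_eq_far_commute[OF far] .
    finally have "braid_eq n ([i] @ delta p @ w) (delta (Suc m))" using p by (simp add: braid_eq_sym)
    then show ?thesis unfolding ldvd_def by blast
  qed
qed simp

lemma ldvd_delta_iff:
  "m \<le> n \<Longrightarrow> ldvd n (delta m) v \<longleftrightarrow> (\<forall>i\<in>{1..<m}. ldvd n [i] v)"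
  using delta_ldvd_if_generators_ldvd generator_ldvd_delta ldvd_trans by blast

lemma braid_eq_rev_delta: "m \<le> n \<Longrightarrow> braid_eq n (rev (delta m)) (delta m)"
proof (induction m)
  case (Suc k)
  have "rev (delta (Suc k)) = rev (delta k) @ desc_word k"
    by (simp only: delta.simps rev_append rev_upt_eq_desc_word)
  also have "braid_eq n \<dots> (delta k @ desc_word k)"
    using Suc by (simp add: braid_eq_append_right)
  also have "braid_eq n \<dots> (delta (Suc k))"
    using delta_Suc_braid_eq[of k n] Suc.prems by (simp add: braid_eq_sym)
  finally show ?case .
qed simp

lemma ldiv_iff_ldvd: "v \<in> pos_words n \<Longrightarrow> ldiv n u v \<longleftrightarrow> ldvd n u v"
  unfolding ldiv_def ldvd_def pos_words_def
  by (metis (no_types, lifting) Un_subset_iff braid_eq_set mem_Collect_eq set_append)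

lemma rdiv_iff_ldvd_rev: "v \<in> pos_words n \<Longrightarrow> rdiv n u v \<longleftrightarrow> ldvd n (rev u) (rev v)"
proof
  assume "rdiv n u v"
  then obtain c where "braid_eq n (c @ u) v" unfolding rdiv_def by auto
  then have "braid_eq n (rev u @ rev c) (rev v)" using braid_eq_rev by fastforce
  then show "ldvd n (rev u) (rev v)" unfolding ldvd_def by blast
next
  assume v: "v \<in> pos_words n" and "ldvd n (rev u) (rev v)"
  then obtain c where "braid_eq n (rev u @ c) (rev v)" unfolding ldvd_def by auto
  then have c: "braid_eq n (rev c @ u) v" using braid_eq_rev by fastforce
  then have "rev c \<in> pos_words n" using v braid_eq_set unfolding pos_words_def by fastforce
  with c show "rdiv n u v" unfolding rdiv_def by blast
qed

lemma mem_braid_cls: "v \<in> braid_cls n u \<longleftrightarrow> braid_eq n u v"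
  unfolding braid_cls_def by simp

lemma ex_rdiv_braid_cls: "(\<exists>w \<in> braid_cls n u. rdiv n a w) \<longleftrightarrow> rdiv n a u"
proof
  assume "\<exists>w \<in> braid_cls n u. rdiv n a w"
  then obtain w c where "braid_eq n u w" "c \<in> pos_words n" "braid_eq n (c @ a) w"
    by (auto simp: mem_braid_cls rdiv_def)
  then show "rdiv n a u" unfolding rdiv_def using braid_eq_sym braid_eq_trans by blast
next
  assume "rdiv n a u"
  then show "\<exists>w \<in> braid_cls n u. rdiv n a w" using mem_braid_cls braid_eq_refl by blast
qed

lemma delta_pos_words: "m \<le> n \<Longrightarrow> delta m \<in> pos_words n"
  by (auto simp: pos_words_def set_delta)

lemma delta_simple:
  assumes "m \<le> n"
  shows "braid_cls n (delta m) \<in> simple_braids n"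
proof -
  have "ldvd n (delta m) (delta n)"
    using ldvd_delta_iff[OF assms] generator_ldvd_delta[of n n] assms by auto
  then have "ldiv n (delta m) (delta n)" using ldiv_iff_ldvd delta_pos_words by blast
  then show ?thesis using delta_pos_words[OF assms] unfolding simple_braids_def by blast
qed

lemma DL_delta:
  assumes "m \<le> n"
  shows "DL n (braid_cls n (delta m)) = {1..<m}"
proof (intro set_eqI iffI)
  fix i assume "i \<in> DL n (braid_cls n (delta m))"
  then obtain w c where "braid_eq n (delta m) w" "braid_eq n ([i] @ c) w"
    unfolding DL_def ldiv_def by (auto simp: mem_braid_cls)
  then have "set ([i] @ c) = set (delta m)" using braid_eq_set by metis
  then show "i \<in> {1..<m}" by (auto simp: set_delta)
next
  fix i assume i: "i \<in> {1..<m}"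
  then have "ldiv n [i] (delta m)"
    using generator_ldvd_delta ldiv_iff_ldvd[OF delta_pos_words] assms by blast
  with assms i show "i \<in> DL n (braid_cls n (delta m))"
    unfolding DL_def using mem_braid_cls braid_eq_refl by fastforce
qed

lemma subset_DR_iff_rdiv_delta:
  assumes "m \<le> n" and u: "u \<in> pos_words n"
  shows "{1..<m} \<subseteq> DR n (braid_cls n u) \<longleftrightarrow> rdiv n (delta m) u"
proof -
  have "{1..<m} \<subseteq> DR n (braid_cls n u) \<longleftrightarrow> (\<forall>i\<in>{1..<m}. rdiv n [i] u)"
    using \<open>m \<le> n\<close> by (auto simp: DR_def ex_rdiv_braid_cls)
  also have "\<dots> \<longleftrightarrow> (\<forall>i\<in>{1..<m}. ldvd n [i] (rev u))"
    using rdiv_iff_ldvd_rev[OF u] by simp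
  also have "\<dots> \<longleftrightarrow> ldvd n (delta m) (rev u)"
    using ldvd_delta_iff[OF \<open>m \<le> n\<close>] by simp
  also have "\<dots> \<longleftrightarrow> ldvd n (rev (delta m)) (rev u)"
    using braid_eq_rev_delta[OF \<open>m \<le> n\<close>] ldvd_braid_eq_left braid_eq_sym by blast
  also have "\<dots> \<longleftrightarrow> rdiv n (delta m) u"
    using rdiv_iff_ldvd_rev[OF u] by simp
  finally show ?thesis .
qed

lemma normal_seq_snoc:
  "normal_seq n (xs @ [y]) \<longleftrightarrow>
    normal_seq n xs \<and> y \<in> simple_braids n \<and> (xs \<noteq> [] \<longrightarrow> DL n y \<subseteq> DR n (last xs))"
proof -
  have "(\<forall>k. Suc k < length (xs @ [y]) \<longrightarrow> DL n ((xs @ [y]) ! Suc k) \<subseteq> DR n ((xs @ [y]) ! k))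
    \<longleftrightarrow> (\<forall>k. Suc k < length xs \<longrightarrow> DL n (xs ! Suc k) \<subseteq> DR n (xs ! k))
      \<and> (xs \<noteq> [] \<longrightarrow> DL n y \<subseteq> DR n (last xs))"
    by (cases xs rule: rev_cases) (auto simp: nth_append less_Suc_eq)
  then show ?thesis unfolding normal_seq_def by auto
qed

lemma finite_simple_braids: "finite (simple_braids n)"
proof -
  have "simple_braids n \<subseteq> braid_cls n ` {w. set w \<subseteq> {1..<n} \<and> length w \<le> length (delta n)}"
    unfolding simple_braids_def ldiv_def pos_words_def
    by (auto dest!: braid_eq_length)
  moreover have "finite {w. set w \<subseteq> {1..<n} \<and> length w \<le> length (delta n)}"
    by (rule finite_lists_length_le) simp
  ultimately show ?thesis using finite_surj by blast
qed

lemma bnd_eq_sum_DR: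
  assumes y: "y \<in> simple_braids n" and "2 \<le> d"
  shows "bnd n d y = (\<Sum>x \<in> {x \<in> simple_braids n. DL n y \<subseteq> DR n x}. bnd n (d - 1) x)"
proof -
  define T where "T = {x \<in> simple_braids n. DL n y \<subseteq> DR n x}"
  define B where "B x = {ys. length ys = d - 1 - 1 \<and> normal_seq n (ys @ [x])}" for x
  have seqs: "{xs. length xs = d - 1 \<and> normal_seq n (xs @ [y])} = (\<lambda>(x, ys). ys @ [x]) ` Sigma T B"
  proof (intro set_eqI iffI)
    fix xs assume xs: "xs \<in> {xs. length xs = d - 1 \<and> normal_seq n (xs @ [y])}"
    then have "xs \<noteq> []" using \<open>2 \<le> d\<close> by auto
    then have "xs = butlast xs @ [last xs]" by simp
    with xs have "butlast xs \<in> B (last xs)" "last xs \<in> T"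
      using normal_seq_snoc[of n xs y] normal_seq_snoc[of n "butlast xs" "last xs"]
      unfolding B_def T_def by (auto simp: \<open>xs \<noteq> []\<close>)
    with \<open>xs = butlast xs @ [last xs]\<close> show "xs \<in> (\<lambda>(x, ys). ys @ [x]) ` Sigma T B" by force
  next
    fix xs assume "xs \<in> (\<lambda>(x, ys). ys @ [x]) ` Sigma T B"
    then obtain x ys where "xs = ys @ [x]" "x \<in> T" "ys \<in> B x" by auto
    then show "xs \<in> {xs. length xs = d - 1 \<and> normal_seq n (xs @ [y])}"
      using normal_seq_snoc[of n "ys @ [x]" y] y \<open>2 \<le> d\<close> unfolding B_def T_def by auto
  qed
  have "inj_on (\<lambda>(x, ys). ys @ [x]) (Sigma T B)" by (auto intro!: inj_onI)
  moreover have "finite T" using finite_simple_braids unfolding T_def by simp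
  moreover have "finite (B x)" for x
  proof (rule finite_subset)
    show "B x \<subseteq> {ys. set ys \<subseteq> simple_braids n \<and> length ys \<le> d}"
      unfolding B_def normal_seq_def by auto
    show "finite {ys. set ys \<subseteq> simple_braids n \<and> length ys \<le> d}"
      by (rule finite_lists_length_le[OF finite_simple_braids])
  qed
  ultimately have "card ((\<lambda>(x, ys). ys @ [x]) ` Sigma T B) = (\<Sum>x\<in>T. card (B x))"
    by (simp add: card_image)
  then show ?thesis unfolding bnd_def seqs B_def T_def .
qed

theorem lemma4p3:
  fixes n d r :: nat
  assumes "n \<ge> 1" and "d \<ge> 2" and "1 \<le> r" and "r \<le> n"
  shows "bnd n d (braid_cls n (delta (n - r))) =
    (\<Sum>x \<in> {x \<in> simple_braids n. \<exists>w \<in> x. rdiv n (delta (n - r)) w}. bnd n (d - 1) x)"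
proof -
  have m: "n - r \<le> n" by simp
  have "{x \<in> simple_braids n. DL n (braid_cls n (delta (n - r))) \<subseteq> DR n x}
      = {x \<in> simple_braids n. \<exists>w \<in> x. rdiv n (delta (n - r)) w}"
  proof (intro Collect_cong conj_cong refl)
    fix x assume "x \<in> simple_braids n"
    then obtain u where "x = braid_cls n u" "u \<in> pos_words n" unfolding simple_braids_def by blast
    then show "DL n (braid_cls n (delta (n - r))) \<subseteq> DR n x \<longleftrightarrow> (\<exists>w \<in> x. rdiv n (delta (n - r)) w)"
      using subset_DR_iff_rdiv_delta[OF m] DL_delta[OF m] ex_rdiv_braid_cls by simp
  qed
  then show ?thesis using bnd_eq_sum_DR[OF delta_simple[OF m] \<open>d \<ge> 2\<close>] by simp
qed

end
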